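(* Let $g=\delta_{\{0\}}$ on $c_c$ (so $g^*\equiv 0$ on $\ell^2$). Then the primal problem $\inf_{x\in c_c}\left(f(x)+g(x)\right)$ has value $f(0)=\pi^2/12$, and the Fenchel dual problem $\sup_{y\in\ell^2}\left(-f^*(y)-g^*(-y)\right)=\sup_{y\in\ell^2}\left(-f^*(y)\right)$ also has value $\pi^2/12$ (no duality gap), but the dual supremum is not attained by any $y\in\ell^2$.
   Context: Let $c_c$ be the space of finitely supported real sequences with the $\ell^2$-norm; its dual is identified with $\ell^2$ via $\langle y,x\rangle=\sum_n y_nx_n$. Let $f\colon c_c\to\mathbb{R}$, $f(x)=\sum_{n=1}^\infty \frac{n^2}{2}(x_n-n^{-2})^2$. For $h\colon c_c\to(-\infty,\infty]$, $h^*(y)=\sup_{x\in c_c}(\langle y,x\rangle-h(x))$ for $y\in\ell^2$. $\delta_{\{0\}}$ denotes the indicator function of $\{0\}$ (value $0$ at $0$ and $+\infty$ elsewhere). *)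

theory Defs
  imports "HOL-Analysis.Analysis"
begin

text \<open>Real sequences are indexed by n = 1, 2, ...; we represent them as functions
  nat => real whose value at index 0 is fixed to 0 (index 0 is unused).\<close>

definition cc :: "(nat \<Rightarrow> real) set" where
  "cc = {x. finite {n. x n \<noteq> 0} \<and> x 0 = 0}"

definition l2 :: "(nat \<Rightarrow> real) set" where
  "l2 = {y. y 0 = 0 \<and> summable (\<lambda>n. (y n)\<^sup>2)}"

definition pairing :: "(nat \<Rightarrow> real) \<Rightarrow> (nat \<Rightarrow> real) \<Rightarrow> real" where
  "pairing y x = (\<Sum>n. y n * x n)"

definition fconj :: "((nat \<Rightarrow> real) \<Rightarrow> ereal) \<Rightarrow> (nat \<Rightarrow> real) \<Rightarrow> ereal" where
  "fconj h y = (SUP x\<in>cc. ereal (pairing y x) - h x)"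

definition fF :: "(nat \<Rightarrow> real) \<Rightarrow> real" where
  "fF x = (\<Sum>n. if n = 0 then 0 else (real n)\<^sup>2 / 2 * (x n - 1 / (real n)\<^sup>2)\<^sup>2)"

definition gG :: "(nat \<Rightarrow> real) \<Rightarrow> ereal" where
  "gG x = (if x = (\<lambda>_. 0) then 0 else \<infinity>)"

end

theory Submission
  imports Defs
begin

text \<open>Coordinatewise, completing the square gives
  \<open>y t - n\<^sup>2/2 (t - 1/n\<^sup>2)\<^sup>2 \<le> ((1 + y)\<^sup>2 - 1) / (2 n\<^sup>2)\<close>, with equality at
  \<open>t = (1 + y)/n\<^sup>2\<close>. Summing, \<open>f\<^sup>*(y) \<le> -\<pi>\<^sup>2/12 + \<Sum>\<^sub>n (1 + y\<^sub>n)\<^sup>2/(2n\<^sup>2)\<close>, and moving a single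
  coordinate \<open>n\<close> to its optimum shows \<open>f\<^sup>*(y) \<ge> -\<pi>\<^sup>2/12 + (1 + y\<^sub>n)\<^sup>2/(2n\<^sup>2)\<close>. Hence the dual
  objective \<open>-f\<^sup>*(y)\<close> is at most \<open>\<pi>\<^sup>2/12\<close>, strictly so because \<open>y\<^sub>n \<rightarrow> 0\<close> forces some
  \<open>y\<^sub>n \<noteq> -1\<close>, while the truncations \<open>y = (-1,\<dots>,-1,0,\<dots>)\<close> bring it arbitrarily close
  to \<open>\<pi>\<^sup>2/12\<close>; the supremum needs \<open>y = (-1,-1,\<dots>)\<close>, which is not in \<open>\<ell>\<^sup>2\<close>.\<close>

definition fF_weight :: "nat \<Rightarrow> real" where
  "fF_weight n = (if n = 0 then 0 else 1 / (2 * (real n)\<^sup>2))"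

definition fF_term :: "nat \<Rightarrow> real \<Rightarrow> real" where
  "fF_term n t = (if n = 0 then 0 else (real n)\<^sup>2 / 2 * (t - 1 / (real n)\<^sup>2)\<^sup>2)"

lemma fF_eq_suminf: "fF x = (\<Sum>n. fF_term n (x n))"
  unfolding fF_def fF_term_def ..

lemma fF_term_zero: "fF_term n 0 = fF_weight n"
  by (simp add: fF_term_def fF_weight_def field_simps power2_eq_square)

lemma sums_fF_weight: "fF_weight sums (pi\<^sup>2 / 12)"
proof -
  have "(\<lambda>n. fF_weight (Suc n)) sums (pi\<^sup>2 / 6 / 2)"
    using sums_divide[OF inverse_squares_sums, of 2] by (simp add: fF_weight_def mult.commute)
  then have "fF_weight sums (pi\<^sup>2 / 12 + fF_weight 0)"
    by (subst sums_Suc_iff [symmetric]) simp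
  then show ?thesis
    by (simp add: fF_weight_def)
qed

lemma quadratic_complete_square:
  fixes s y t :: real
  assumes "s \<noteq> 0"
  shows "y * t - s / 2 * (t - 1 / s)\<^sup>2 = ((y + 1)\<^sup>2 - 1) / (2 * s) - s / 2 * (t - (1 + y) / s)\<^sup>2"
  using assms by (simp add: power2_eq_square field_simps)

lemma fF_term_conj_le:
  assumes "n = 0 \<Longrightarrow> t = 0"
  shows "y * t - fF_term n t \<le> ((y + 1)\<^sup>2 - 1) * fF_weight n"
proof (cases "n = 0")
  case False
  then have "y * t - fF_term n t
      = ((y + 1)\<^sup>2 - 1) * fF_weight n - (real n)\<^sup>2 / 2 * (t - (1 + y) / (real n)\<^sup>2)\<^sup>2"
    using quadratic_complete_square[of "(real n)\<^sup>2" y t] by (simp add: fF_term_def fF_weight_def)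
  then show ?thesis
    by simp
qed (use assms in \<open>simp add: fF_term_def fF_weight_def\<close>)

text \<open>For \<open>n = 0\<close> the maximiser \<open>(1 + y)/n\<^sup>2\<close> is \<open>0\<close> by division by zero, and the
  identity still holds.\<close>
lemma fF_term_conj_at_max:
  "y * ((1 + y) / (real n)\<^sup>2) - fF_term n ((1 + y) / (real n)\<^sup>2) = ((y + 1)\<^sup>2 - 1) * fF_weight n"
  using quadratic_complete_square[of "(real n)\<^sup>2" y "(1 + y) / (real n)\<^sup>2"]
  by (cases "n = 0") (simp_all add: fF_term_def fF_weight_def)

lemma fF_term_sums_finite_support:
  assumes "finite S" and "\<And>n. n \<notin> S \<Longrightarrow> x n = 0"
  shows "(\<lambda>n. fF_term n (x n)) sums (pi\<^sup>2 / 12 + (\<Sum>n\<in>S. fF_term n (x n) - fF_weight n))"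
proof -
  have "(\<lambda>n. fF_term n (x n) - fF_weight n) sums (\<Sum>n\<in>S. fF_term n (x n) - fF_weight n)"
    using assms by (intro sums_finite) (auto simp: fF_term_zero)
  from sums_add[OF sums_fF_weight this] show ?thesis
    by simp
qed

lemma pairing_finite_support:
  fixes x y :: "nat \<Rightarrow> real"
  assumes "finite S" and "\<And>n. n \<notin> S \<Longrightarrow> x n = 0"
  shows "(\<lambda>n. y n * x n) sums (\<Sum>n\<in>S. y n * x n)"
  using assms(1) by (rule sums_finite) (simp add: assms(2))

lemma cc_finite_support: "x \<in> cc \<Longrightarrow> finite {n. x n \<noteq> 0}"
  by (simp add: cc_def)

lemma zero_in_cc: "(\<lambda>_. 0) \<in> cc"
  by (simp add: cc_def)

lemma fF_zero: "fF (\<lambda>_. 0) = pi\<^sup>2 / 12"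
  using fF_term_sums_finite_support[of "{}" "\<lambda>_. 0"] by (simp add: fF_eq_suminf sums_iff)

lemma pairing_minus_fF:
  assumes "x \<in> cc"
  shows "pairing y x - fF x = (\<Sum>n. y n * x n - fF_term n (x n))"
proof -
  have support: "finite {n. x n \<noteq> 0}"
    using assms by (rule cc_finite_support)
  have "summable (\<lambda>n. y n * x n)"
    by (rule sums_summable[OF pairing_finite_support[OF support]]) simp
  moreover have "summable (\<lambda>n. fF_term n (x n))"
    by (rule sums_summable[OF fF_term_sums_finite_support[OF support]]) simp
  ultimately show ?thesis
    unfolding pairing_def fF_eq_suminf by (rule suminf_diff)
qed

lemma fconj_ge: "x \<in> cc \<Longrightarrow> ereal (pairing y x) - h x \<le> fconj h y"
  unfolding fconj_def by (rule SUP_upper)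

lemma fconj_fF_le:
  assumes "summable (\<lambda>n. ((y n + 1)\<^sup>2 - 1) * fF_weight n)"
  shows "fconj (\<lambda>x. ereal (fF x)) y \<le> ereal (\<Sum>n. ((y n + 1)\<^sup>2 - 1) * fF_weight n)"
  unfolding fconj_def
proof (rule SUP_least)
  fix x assume x: "x \<in> cc"
  have "summable (\<lambda>n. y n * x n - fF_term n (x n))"
    using cc_finite_support[OF x]
    by (intro summable_diff sums_summable[OF pairing_finite_support]
        sums_summable[OF fF_term_sums_finite_support]) auto
  moreover have "y n * x n - fF_term n (x n) \<le> ((y n + 1)\<^sup>2 - 1) * fF_weight n" for n
    using x by (intro fF_term_conj_le) (simp add: cc_def)
  ultimately have "pairing y x - fF x \<le> (\<Sum>n. ((y n + 1)\<^sup>2 - 1) * fF_weight n)"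
    unfolding pairing_minus_fF[OF x] using assms by (intro suminf_le)
  then show "ereal (pairing y x) - ereal (fF x) \<le> ereal (\<Sum>n. ((y n + 1)\<^sup>2 - 1) * fF_weight n)"
    by simp
qed

lemma fconj_fF_ge:
  "ereal (- (pi\<^sup>2 / 12) + (y n + 1)\<^sup>2 * fF_weight n) \<le> fconj (\<lambda>x. ereal (fF x)) y"
proof -
  define t where "t = (1 + y n) / (real n)\<^sup>2"
  define x where "x = (\<lambda>m. if m = n then t else 0)"
  have support: "m \<notin> {n} \<Longrightarrow> x m = 0" for m
    by (simp add: x_def)
  have "x \<in> cc"
    by (auto simp: cc_def x_def t_def)
  have "fF x = pi\<^sup>2 / 12 + (fF_term n t - fF_weight n)"
    using fF_term_sums_finite_support[of "{n}" x] support by (simp add: fF_eq_suminf sums_iff x_def)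
  moreover have "pairing y x = y n * t"
    using pairing_finite_support[of "{n}" x y] support by (simp add: pairing_def sums_iff x_def)
  ultimately have "pairing y x - fF x = - (pi\<^sup>2 / 12) + (y n + 1)\<^sup>2 * fF_weight n"
    using fF_term_conj_at_max[of "y n" n] by (simp add: t_def algebra_simps)
  with fconj_ge[OF \<open>x \<in> cc\<close>, of y "\<lambda>x. ereal (fF x)"] show ?thesis
    by simp
qed

lemma fconj_fF_lower: "ereal (- (pi\<^sup>2 / 12)) \<le> fconj (\<lambda>x. ereal (fF x)) y"
  using fconj_fF_ge[of y 0] by (simp add: fF_weight_def)

lemma l2_exists_ne_minus_one:
  assumes "y \<in> l2"
  obtains n where "n \<noteq> 0" and "y n \<noteq> -1"
proof (rule ccontr)
  assume "\<not> thesis"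
  with that have "y n = -1" if "n \<ge> 1" for n
    using \<open>n \<ge> 1\<close> by force
  then have "eventually (\<lambda>n. (y n)\<^sup>2 = 1) sequentially"
    by (auto simp: eventually_at_top_linorder intro!: exI[of _ 1])
  moreover have "(\<lambda>n. (y n)\<^sup>2) \<longlonglongrightarrow> 0"
    using assms by (intro summable_LIMSEQ_zero) (simp add: l2_def)
  ultimately have "(\<lambda>n. 1 :: real) \<longlonglongrightarrow> 0"
    by (rule Lim_transform_eventually[rotated])
  then show False
    by (simp add: LIMSEQ_const_iff)
qed

lemma fconj_fF_gt:
  assumes "y \<in> l2"
  shows "ereal (- (pi\<^sup>2 / 12)) < fconj (\<lambda>x. ereal (fF x)) y"
proof -
  obtain n where "n \<noteq> 0" and "y n \<noteq> -1"
    using l2_exists_ne_minus_one[OF assms] .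
  then have "0 < (y n + 1)\<^sup>2 * fF_weight n"
    by (simp add: fF_weight_def)
  then have "ereal (- (pi\<^sup>2 / 12)) < ereal (- (pi\<^sup>2 / 12) + (y n + 1)\<^sup>2 * fF_weight n)"
    by simp
  also have "\<dots> \<le> fconj (\<lambda>x. ereal (fF x)) y"
    by (rule fconj_fF_ge)
  finally show ?thesis .
qed

definition minus_ones_upto :: "nat \<Rightarrow> nat \<Rightarrow> real" where
  "minus_ones_upto N n = (if 0 < n \<and> n < N then -1 else 0)"

lemma minus_ones_upto_l2: "minus_ones_upto N \<in> l2"
  unfolding l2_def
  by (auto simp: minus_ones_upto_def intro!: summable_finite[of "{..<N}"] split: if_splits)

lemma fconj_fF_minus_ones_upto:
  "fconj (\<lambda>x. ereal (fF x)) (minus_ones_upto N) \<le> ereal (- (\<Sum>n<N. fF_weight n))"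
proof -
  have "((minus_ones_upto N n + 1)\<^sup>2 - 1) * fF_weight n = (if n \<in> {..<N} then - fF_weight n else 0)"
    for n
    by (simp add: minus_ones_upto_def fF_weight_def)
  then have "(\<lambda>n. ((minus_ones_upto N n + 1)\<^sup>2 - 1) * fF_weight n) sums (\<Sum>n<N. - fF_weight n)"
    using sums_If_finite_set[of "{..<N}" "\<lambda>n. - fF_weight n"] by simp
  with fconj_fF_le[of "minus_ones_upto N"] show ?thesis
    by (simp add: sums_iff sum_negf)
qed

lemma fconj_gG: "fconj gG y = 0"
proof (rule antisym)
  show "fconj gG y \<le> 0"
    unfolding fconj_def
    by (rule SUP_least) (simp add: gG_def pairing_def)
  show "0 \<le> fconj gG y"
    using fconj_ge[OF zero_in_cc, of y gG] by (simp add: gG_def pairing_def zero_ereal_def)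
qed

lemma primal_value: "(INF x\<in>cc. ereal (fF x) + gG x) = ereal (fF (\<lambda>_. 0))"
proof (rule antisym)
  show "(INF x\<in>cc. ereal (fF x) + gG x) \<le> ereal (fF (\<lambda>_. 0))"
    using INF_lower[OF zero_in_cc, of "\<lambda>x. ereal (fF x) + gG x"] by (simp add: gG_def)
  show "ereal (fF (\<lambda>_. 0)) \<le> (INF x\<in>cc. ereal (fF x) + gG x)"
    by (rule INF_greatest) (simp add: gG_def)
qed

lemma dual_value: "(SUP y\<in>l2. - fconj (\<lambda>x. ereal (fF x)) y) = ereal (pi\<^sup>2 / 12)"
proof (rule antisym)
  show "(SUP y\<in>l2. - fconj (\<lambda>x. ereal (fF x)) y) \<le> ereal (pi\<^sup>2 / 12)"
    using fconj_fF_lower by (intro SUP_least) (metis ereal_uminus_le_reorder uminus_ereal.simps(1))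
  have "ereal (\<Sum>n<N. fF_weight n) \<le> (SUP y\<in>l2. - fconj (\<lambda>x. ereal (fF x)) y)" for N
  proof -
    have "ereal (\<Sum>n<N. fF_weight n) \<le> - fconj (\<lambda>x. ereal (fF x)) (minus_ones_upto N)"
      using fconj_fF_minus_ones_upto[of N]
      by (metis ereal_minus_le_minus ereal_uminus_uminus uminus_ereal.simps(1))
    also have "\<dots> \<le> (SUP y\<in>l2. - fconj (\<lambda>x. ereal (fF x)) y)"
      by (rule SUP_upper[OF minus_ones_upto_l2])
    finally show ?thesis .
  qed
  moreover have "(\<lambda>N. ereal (\<Sum>n<N. fF_weight n)) \<longlonglongrightarrow> ereal (pi\<^sup>2 / 12)"
    using sums_fF_weight by (simp add: sums_def)
  ultimately show "ereal (pi\<^sup>2 / 12) \<le> (SUP y\<in>l2. - fconj (\<lambda>x. ereal (fF x)) y)"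
    by (intro LIMSEQ_le_const2[of "\<lambda>N. ereal (\<Sum>n<N. fF_weight n)"]) blast+
qed

theorem mainTheorem6:
  shows "(\<forall>y\<in>l2. fconj gG y = 0)
    \<and> fF (\<lambda>_. 0) = pi\<^sup>2 / 12
    \<and> (INF x\<in>cc. ereal (fF x) + gG x) = ereal (fF (\<lambda>_. 0))
    \<and> (INF x\<in>cc. ereal (fF x) + gG x) = ereal (pi\<^sup>2 / 12)
    \<and> (SUP y\<in>l2. - fconj (\<lambda>x. ereal (fF x)) y - fconj gG (\<lambda>n. - y n))
        = (SUP y\<in>l2. - fconj (\<lambda>x. ereal (fF x)) y)
    \<and> (SUP y\<in>l2. - fconj (\<lambda>x. ereal (fF x)) y - fconj gG (\<lambda>n. - y n)) = ereal (pi\<^sup>2 / 12)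
    \<and> \<not> (\<exists>y\<in>l2. - fconj (\<lambda>x. ereal (fF x)) y - fconj gG (\<lambda>n. - y n) = ereal (pi\<^sup>2 / 12))"
proof -
  have not_attained: "- fconj (\<lambda>x. ereal (fF x)) y \<noteq> ereal (pi\<^sup>2 / 12)" if "y \<in> l2" for y
    using fconj_fF_gt[OF that] by (auto simp: ereal_uminus_eq_reorder)
  show ?thesis
    using primal_value dual_value not_attained by (simp add: fconj_gG fF_zero)
qed

end
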